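(* Let $\mathbf{P}_m,\mathbf{P}_M$ be probability measures on a measurable space $\mathcal{Y}$, let $r:\mathcal{Y}\to\mathbb{R}$ be measurable and integrable under both $\mathbf{P}_m$ and $\mathbf{P}_M$, and let $\omega:\mathbb{R}\to[0,1]$ be measurable and non-decreasing; set $\omega_r(y)=\omega(r(y))$, $\nu=1-\mathbf{E}_{\mathbf{P}_m}[\omega_r]$, and $\mathbf{P}_{\mathrm{RSD}}=\omega_r\mathbf{P}_m+\nu\mathbf{P}_M$ (the probability measure $B\mapsto\int_B\omega_r\,d\mathbf{P}_m+\nu\mathbf{P}_M(B)$). If $\mathbf{E}_{\mathbf{P}_M}[r]\ge\mathbf{E}_{\mathbf{P}_m}[r]$, then $$\mathbf{E}_{y\sim\mathbf{P}_{\mathrm{RSD}}}[r(y)]\ \ge\ \mathbf{E}_{y\sim\mathbf{P}_m}[r(y)].$$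
   Context: $\mathbf{P}_m$ and $\mathbf{P}_M$ represent the next-step distributions of a draft model and a target model given a fixed context, $r$ is a reward function on steps, and $\mathbf{P}_{\mathrm{RSD}}$ is the mixture distribution produced by accepting a draft step $y$ with probability $\omega(r(y))$ and otherwise sampling from the target model. *)

theory Defs
  imports "HOL-Probability.Probability"
begin

definition rsd_nu :: "'a measure \<Rightarrow> (real \<Rightarrow> real) \<Rightarrow> ('a \<Rightarrow> real) \<Rightarrow> real" where
  "rsd_nu Pm \<omega> r = 1 - (\<integral>y. \<omega> (r y) \<partial>Pm)"

definition rsd_measure ::
  "'a measure \<Rightarrow> 'a measure \<Rightarrow> (real \<Rightarrow> real) \<Rightarrow> ('a \<Rightarrow> real) \<Rightarrow> 'a measure" where
  "rsd_measure Pm PM \<omega> r =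
     measure_of (space Pm) (sets Pm)
       (\<lambda>B. (\<integral>\<^sup>+ y. ennreal (\<omega> (r y)) * indicator B y \<partial>Pm)
            + ennreal (rsd_nu Pm \<omega> r) * emeasure PM B)"

end

theory Submission
  imports Defs
begin

text \<open>The mixture integral splits as
  \<open>E\<^sub>R\<^sub>S\<^sub>D[r] = E\<^sub>m[\<omega>\<^sub>r r] + \<nu> E\<^sub>M[r]\<close>.
  Since \<open>\<omega>\<close> is non-decreasing, \<open>\<omega>\<^sub>r\<close> and \<open>r\<close> are comonotone, so Chebyshev's
  association inequality gives \<open>E\<^sub>m[\<omega>\<^sub>r r] \<ge> E\<^sub>m[\<omega>\<^sub>r] E\<^sub>m[r] = (1 - \<nu>) E\<^sub>m[r]\<close>;
  together with \<open>\<nu> \<ge> 0\<close> and \<open>E\<^sub>M[r] \<ge> E\<^sub>m[r]\<close> this yields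
  \<open>E\<^sub>R\<^sub>S\<^sub>D[r] \<ge> (1 - \<nu>) E\<^sub>m[r] + \<nu> E\<^sub>m[r] = E\<^sub>m[r]\<close>.\<close>

lemma emeasure_measure_of_add:
  assumes sA: "sets A = sets M" and sB: "sets B = sets M" and X: "X \<in> sets M"
  shows "emeasure (measure_of (space M) (sets M) (\<lambda>X. emeasure A X + emeasure B X)) X
    = emeasure A X + emeasure B X"
proof (rule emeasure_measure_of_sigma[OF sets.sigma_algebra_axioms _ _ X])
  show "positive (sets M) (\<lambda>X. emeasure A X + emeasure B X)"
    by (simp add: positive_def)
  show "countably_additive (sets M) (\<lambda>X. emeasure A X + emeasure B X)"
    unfolding countably_additive_def
  proof (intro allI impI)
    fix F :: "nat \<Rightarrow> 'a set"
    assume F: "range F \<subseteq> sets M" "disjoint_family F" "\<Union> (range F) \<in> sets M"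
    have "(\<Sum>i. emeasure A (F i) + emeasure B (F i))
        = (\<Sum>i. emeasure A (F i)) + (\<Sum>i. emeasure B (F i))"
      by (rule suminf_add[symmetric]) auto
    also have "\<dots> = emeasure A (\<Union> (range F)) + emeasure B (\<Union> (range F))"
      using F sA sB by (simp add: suminf_emeasure)
    finally show "(\<Sum>i. emeasure A (F i) + emeasure B (F i))
        = emeasure A (\<Union> (range F)) + emeasure B (\<Union> (range F))" .
  qed
qed

lemma nn_integral_sum_measure:
  assumes sA: "sets A = sets M" and sB: "sets B = sets M"
    and e: "\<And>X. X \<in> sets M \<Longrightarrow> emeasure M X = emeasure A X + emeasure B X"
    and f: "f \<in> borel_measurable M"
  shows "integral\<^sup>N M f = integral\<^sup>N A f + integral\<^sup>N B f"
  using f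
proof (induction rule: borel_measurable_induct)
  case (cong f g)
  have "space A = space M" and "space B = space M"
    using sA sB sets_eq_imp_space_eq by blast+
  then show ?case
    using cong by (metis (no_types, lifting) nn_integral_cong)
next
  case (set X)
  then show ?case using sA sB e by (simp add: nn_integral_indicator)
next
  case (mult u c)
  have "u \<in> borel_measurable A" and "u \<in> borel_measurable B"
    using mult(2) sA sB measurable_cong_sets by blast+
  with mult show ?case by (simp add: nn_integral_cmult distrib_left)
next
  case (add u v)
  have "u \<in> borel_measurable A" "v \<in> borel_measurable A"
    and "u \<in> borel_measurable B" "v \<in> borel_measurable B"
    using add sA sB measurable_cong_sets by blast+
  with add show ?case by (simp add: nn_integral_add add_ac)
next
  case (seq U)
  have mA: "\<And>i. U i \<in> borel_measurable A" and mB: "\<And>i. U i \<in> borel_measurable B"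
    using seq(1) sA sB measurable_cong_sets by blast+
  have inc: "incseq (\<lambda>i. integral\<^sup>N A (U i))" "incseq (\<lambda>i. integral\<^sup>N B (U i))"
    using \<open>incseq U\<close> by (auto simp: incseq_def le_fun_def intro!: nn_integral_mono)+
  have "integral\<^sup>N M (SUP i. U i) = (SUP i. integral\<^sup>N M (U i))"
    unfolding SUP_apply[abs_def] by (rule nn_integral_monotone_convergence_SUP) (use seq in auto)
  also have "\<dots> = (SUP i. integral\<^sup>N A (U i) + integral\<^sup>N B (U i))" using seq by simp
  also have "\<dots> = (SUP i. integral\<^sup>N A (U i)) + (SUP i. integral\<^sup>N B (U i))"
    by (rule ennreal_SUP_add[OF inc])
  also have "(SUP i. integral\<^sup>N A (U i)) = integral\<^sup>N A (SUP i. U i)"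
    unfolding SUP_apply[abs_def]
    by (rule nn_integral_monotone_convergence_SUP[symmetric]) (use seq mA in auto)
  also have "(SUP i. integral\<^sup>N B (U i)) = integral\<^sup>N B (SUP i. U i)"
    unfolding SUP_apply[abs_def]
    by (rule nn_integral_monotone_convergence_SUP[symmetric]) (use seq mB in auto)
  finally show ?case .
qed

lemma integral_sum_measure:
  fixes f :: "'a \<Rightarrow> real"
  assumes sA: "sets A = sets M" and sB: "sets B = sets M"
    and e: "\<And>X. X \<in> sets M \<Longrightarrow> emeasure M X = emeasure A X + emeasure B X"
    and iA: "integrable A f" and iB: "integrable B f"
  shows "integral\<^sup>L M f = integral\<^sup>L A f + integral\<^sup>L B f"
proof -
  have fM: "f \<in> borel_measurable M"
    using borel_measurable_integrable[OF iA] sA measurable_cong_sets by blast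
  have pos: "(\<integral>\<^sup>+ x. ennreal (f x) \<partial>M) = (\<integral>\<^sup>+ x. ennreal (f x) \<partial>A) + (\<integral>\<^sup>+ x. ennreal (f x) \<partial>B)"
    using fM by (intro nn_integral_sum_measure[OF sA sB e]) auto
  have neg: "(\<integral>\<^sup>+ x. ennreal (- f x) \<partial>M) = (\<integral>\<^sup>+ x. ennreal (- f x) \<partial>A) + (\<integral>\<^sup>+ x. ennreal (- f x) \<partial>B)"
    using fM by (intro nn_integral_sum_measure[OF sA sB e]) auto
  have fin: "(\<integral>\<^sup>+ x. ennreal (f x) \<partial>A) < top" "(\<integral>\<^sup>+ x. ennreal (f x) \<partial>B) < top"
      "(\<integral>\<^sup>+ x. ennreal (- f x) \<partial>A) < top" "(\<integral>\<^sup>+ x. ennreal (- f x) \<partial>B) < top"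
    using integrableD[OF iA] integrableD[OF iB] by (auto simp: less_top)
  have iM: "integrable M f"
    unfolding real_integrable_def using fM pos neg fin by auto
  show ?thesis
    unfolding real_lebesgue_integral_def[OF iM] real_lebesgue_integral_def[OF iA]
      real_lebesgue_integral_def[OF iB] pos neg
    using fin by (simp add: enn2real_plus)
qed

lemma (in prob_space) integral_mono_comp_mult_ge:
  fixes X :: "'a \<Rightarrow> real" and \<omega> :: "real \<Rightarrow> real"
  assumes "mono \<omega>" and iX: "integrable M X" and i\<omega>: "integrable M (\<lambda>x. \<omega> (X x))"
    and "integrable M (\<lambda>x. \<omega> (X x) * X x)"
  shows "(\<integral>x. \<omega> (X x) \<partial>M) * (\<integral>x. X x \<partial>M) \<le> (\<integral>x. \<omega> (X x) * X x \<partial>M)"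
proof -
  define c where "c = (\<integral>x. X x \<partial>M)"
  have pointwise: "c * \<omega> (X x) + \<omega> c * (X x - c) \<le> \<omega> (X x) * X x" for x
  proof -
    have "0 \<le> (X x - c) * (\<omega> (X x) - \<omega> c)"
      using monoD[OF \<open>mono \<omega>\<close>, of "X x" c] monoD[OF \<open>mono \<omega>\<close>, of c "X x"]
      by (cases "X x \<le> c") (auto intro: mult_nonpos_nonpos mult_nonneg_nonneg)
    then show ?thesis by (simp add: algebra_simps)
  qed
  have "(\<integral>x. c * \<omega> (X x) + \<omega> c * (X x - c) \<partial>M) = c * (\<integral>x. \<omega> (X x) \<partial>M)"
    using iX i\<omega> by (simp add: c_def prob_space)
  moreover have "(\<integral>x. c * \<omega> (X x) + \<omega> c * (X x - c) \<partial>M) \<le> (\<integral>x. \<omega> (X x) * X x \<partial>M)"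
    using pointwise iX i\<omega> assms(4) by (intro integral_mono) auto
  ultimately show ?thesis by (simp add: c_def mult.commute)
qed

lemma rsd_nu_nonneg:
  assumes "prob_space Pm" and "integrable Pm (\<lambda>y. \<omega> (r y))" and "\<And>x. \<omega> x \<le> 1"
  shows "0 \<le> rsd_nu Pm \<omega> r"
proof -
  interpret prob_space Pm by fact
  have "(\<integral>y. \<omega> (r y) \<partial>Pm) \<le> 1"
    using assms(2,3) by (intro integral_le_const) auto
  then show ?thesis by (simp add: rsd_nu_def)
qed

lemma
  assumes sPM: "sets PM = sets Pm" and [measurable]: "(\<lambda>y. \<omega> (r y)) \<in> borel_measurable Pm"
  shows sets_rsd_measure: "sets (rsd_measure Pm PM \<omega> r) = sets Pm"
    and emeasure_rsd_measure: "X \<in> sets Pm \<Longrightarrow> emeasure (rsd_measure Pm PM \<omega> r) X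
      = emeasure (density Pm (\<lambda>y. ennreal (\<omega> (r y)))) X
        + emeasure (density PM (\<lambda>_. ennreal (rsd_nu Pm \<omega> r))) X"
proof -
  let ?D = "density Pm (\<lambda>y. ennreal (\<omega> (r y)))"
  let ?E = "density PM (\<lambda>_. ennreal (rsd_nu Pm \<omega> r))"
  have "rsd_measure Pm PM \<omega> r
      = measure_of (space Pm) (sets Pm) (\<lambda>X. emeasure ?D X + emeasure ?E X)"
    unfolding rsd_measure_def
    by (rule measure_of_eq[OF sets.space_closed])
       (simp add: sets.sigma_sets_eq emeasure_density sPM nn_integral_cmult_indicator)
  then show "sets (rsd_measure Pm PM \<omega> r) = sets Pm"
    and "X \<in> sets Pm \<Longrightarrow> emeasure (rsd_measure Pm PM \<omega> r) X = emeasure ?D X + emeasure ?E X"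
    using sPM by (simp_all add: sets_measure_of_conv sets.sigma_sets_eq sets.space_closed
      emeasure_measure_of_add)
qed

lemma integral_rsd_measure:
  fixes f :: "'a \<Rightarrow> real"
  assumes sPM: "sets PM = sets Pm" and [measurable]: "(\<lambda>y. \<omega> (r y)) \<in> borel_measurable Pm"
    and \<omega>_nonneg: "\<And>x. 0 \<le> \<omega> x" and \<nu>_nonneg: "0 \<le> rsd_nu Pm \<omega> r"
    and "integrable Pm (\<lambda>y. \<omega> (r y) * f y)" and "integrable PM f"
  shows "(\<integral>y. f y \<partial>rsd_measure Pm PM \<omega> r)
    = (\<integral>y. \<omega> (r y) * f y \<partial>Pm) + rsd_nu Pm \<omega> r * (\<integral>y. f y \<partial>PM)"
proof -
  have [measurable]: "f \<in> borel_measurable Pm"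
    using borel_measurable_integrable[OF assms(6)] sPM measurable_cong_sets by blast
  have "integrable (density Pm (\<lambda>y. ennreal (\<omega> (r y)))) f"
    and "integrable (density PM (\<lambda>_. ennreal (rsd_nu Pm \<omega> r))) f"
    using assms(5,6) \<omega>_nonneg \<nu>_nonneg sPM by (subst integrable_density; simp)+
  then have "(\<integral>y. f y \<partial>rsd_measure Pm PM \<omega> r)
      = (\<integral>y. f y \<partial>density Pm (\<lambda>y. ennreal (\<omega> (r y))))
        + (\<integral>y. f y \<partial>density PM (\<lambda>_. ennreal (rsd_nu Pm \<omega> r)))"
    using sPM by (intro integral_sum_measure[OF _ _ emeasure_rsd_measure])
      (simp_all add: sets_rsd_measure)
  also have "\<dots> = (\<integral>y. \<omega> (r y) * f y \<partial>Pm) + rsd_nu Pm \<omega> r * (\<integral>y. f y \<partial>PM)"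
    using \<omega>_nonneg \<nu>_nonneg sPM by (simp add: integral_density)
  finally show ?thesis .
qed

theorem proposition2:
  fixes Pm PM :: "'a measure" and r :: "'a \<Rightarrow> real" and \<omega> :: "real \<Rightarrow> real"
  assumes "prob_space Pm" and "prob_space PM"
    and "sets PM = sets Pm"
    and "r \<in> borel_measurable Pm"
    and "integrable Pm r" and "integrable PM r"
    and "\<omega> \<in> borel_measurable borel"
    and "\<And>x. 0 \<le> \<omega> x \<and> \<omega> x \<le> 1"
    and "mono \<omega>"
    and "(\<integral>y. r y \<partial>PM) \<ge> (\<integral>y. r y \<partial>Pm)"
  shows "(\<integral>y. r y \<partial>(rsd_measure Pm PM \<omega> r)) \<ge> (\<integral>y. r y \<partial>Pm)"
proof -
  interpret prob_space Pm by fact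
  have [measurable]: "(\<lambda>y. \<omega> (r y)) \<in> borel_measurable Pm"
    using assms(4,7) by measurable
  have i\<omega>: "integrable Pm (\<lambda>y. \<omega> (r y))"
    using assms(8) by (intro integrable_const_bound[where B=1]) auto
  have i\<omega>r: "integrable Pm (\<lambda>y. \<omega> (r y) * r y)"
    using assms(4,8) by (intro Bochner_Integration.integrable_bound[OF assms(5)])
      (auto simp: abs_mult mult_left_le_one_le)
  have \<nu>: "0 \<le> rsd_nu Pm \<omega> r"
    using assms(1,8) i\<omega> by (intro rsd_nu_nonneg) auto
  have "(\<integral>y. r y \<partial>Pm) = (\<integral>y. \<omega> (r y) \<partial>Pm) * (\<integral>y. r y \<partial>Pm) + rsd_nu Pm \<omega> r * (\<integral>y. r y \<partial>Pm)"
    by (simp add: rsd_nu_def algebra_simps)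
  also have "\<dots> \<le> (\<integral>y. \<omega> (r y) * r y \<partial>Pm) + rsd_nu Pm \<omega> r * (\<integral>y. r y \<partial>PM)"
    using integral_mono_comp_mult_ge[OF assms(9,5) i\<omega> i\<omega>r] \<nu> assms(10)
    by (intro add_mono mult_left_mono)
  also have "\<dots> = (\<integral>y. r y \<partial>rsd_measure Pm PM \<omega> r)"
    using assms(3,6,8) \<nu> i\<omega>r by (intro integral_rsd_measure[symmetric]) auto
  finally show ?thesis .
qed

end
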